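(* Let $G$ be a graph, $\mathcal H$ a non-piercing family of subgraphs of $G$, and $(T,\{B_z\}_{z\in V(T)})$ a tree decomposition of $G$ with $T$ rooted. Let $\{x,y\}\in E(T)$ with $x$ a child of $y$, and let $A=A_{xy}=B_x\cap B_y$. Let $H,H'\in\mathcal H$ with $V(H)\cap A\ne\emptyset\ne V(H')\cap A$. Then: (i) if $H\cap A=H'\cap A$ and $H|_x\subsetneq H'|_x$, then $H'|_{-x}\subseteq H|_{-x}$; (ii) if $H\cap A=H'\cap A$ and $H|_x, H'|_x$ properly intersect, then $H|_{-x}=H'|_{-x}$; (iii) if $H\cap A\subsetneq H'\cap A$ and $H|_x,H'|_x$ properly intersect, then $H|_{-x}\subseteq H'|_{-x}$.
   Context: All graphs are finite and simple. A subgraph $H$ of a graph $G$ is identified with its vertex set $V(H)$ (subgraphs are taken to be induced). A family $\mathcal H$ of subgraphs of $G$ is non-piercing if every $H\in\mathcal H$ induces a connected subgraph of $G$ and, for all $H,H'\in\mathcal H$, the induced subgraph $G[V(H)\setminus V(H')]$ is connected (an empty vertex set is regarded as connected). For a node $x$ of the rooted tree $T$, $T_x$ is the subtree rooted at $x$, $G_x$ is the subgraph of $G$ induced on $\bigcup_{z\in V(T_x)}B_z$, and $G_{-x}$ is the subgraph induced on $V(G)\setminus V(G_x)$. For a subgraph $H$, $H|_x=V(H)\cap V(G_x)$ and $H|_{-x}=V(H)\cap V(G_{-x})$. Two sets $X,Y$ properly intersect if $X\setminus Y\ne\emptyset$ and $Y\setminus X\ne\emptyset$. *)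

theory Defs
  imports Main
begin

definition simple_graph :: "'a set \<Rightarrow> ('a \<Rightarrow> 'a \<Rightarrow> bool) \<Rightarrow> bool" where
  "simple_graph V E \<longleftrightarrow> finite V \<and> (\<forall>u v. E u v \<longrightarrow> E v u) \<and> (\<forall>u. \<not> E u u)
     \<and> (\<forall>u v. E u v \<longrightarrow> u \<in> V \<and> v \<in> V)"

definition walk_in :: "('a \<Rightarrow> 'a \<Rightarrow> bool) \<Rightarrow> 'a set \<Rightarrow> 'a list \<Rightarrow> bool" where
  "walk_in E S xs \<longleftrightarrow> xs \<noteq> [] \<and> set xs \<subseteq> S \<and>
     (\<forall>i < length xs - 1. E (xs ! i) (xs ! Suc i))"

text \<open>The induced subgraph on S is connected (the empty set counts as connected).\<close>
definition connected_set :: "('a \<Rightarrow> 'a \<Rightarrow> bool) \<Rightarrow> 'a set \<Rightarrow> bool" where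
  "connected_set E S \<longleftrightarrow>
     (\<forall>u\<in>S. \<forall>v\<in>S. \<exists>xs. walk_in E S xs \<and> hd xs = u \<and> last xs = v)"

definition is_tree :: "'b set \<Rightarrow> ('b \<Rightarrow> 'b \<Rightarrow> bool) \<Rightarrow> bool" where
  "is_tree VT ET \<longleftrightarrow> simple_graph VT ET \<and> VT \<noteq> {} \<and> connected_set ET VT \<and>
     (\<forall>u v. ET u v \<longrightarrow>
        \<not> (\<exists>xs. walk_in (\<lambda>a b. ET a b \<and> {a, b} \<noteq> {u, v}) VT xs \<and> hd xs = u \<and> last xs = v))"

text \<open>Subtree T_x of the tree rooted at r: the nodes z such that every walk from z to the
  root passes through x (the descendants of x, including x).\<close>
definition subtree_nodes :: "'b set \<Rightarrow> ('b \<Rightarrow> 'b \<Rightarrow> bool) \<Rightarrow> 'b \<Rightarrow> 'b \<Rightarrow> 'b set" where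
  "subtree_nodes VT ET r x = {z \<in> VT. \<forall>xs. walk_in ET VT xs \<and> hd xs = z \<and> last xs = r \<longrightarrow> x \<in> set xs}"

definition is_child :: "'b set \<Rightarrow> ('b \<Rightarrow> 'b \<Rightarrow> bool) \<Rightarrow> 'b \<Rightarrow> 'b \<Rightarrow> 'b \<Rightarrow> bool" where
  "is_child VT ET r x y \<longleftrightarrow> ET x y \<and> x \<in> subtree_nodes VT ET r y"

definition tree_decomposition ::
  "'a set \<Rightarrow> ('a \<Rightarrow> 'a \<Rightarrow> bool) \<Rightarrow> 'b set \<Rightarrow> ('b \<Rightarrow> 'b \<Rightarrow> bool) \<Rightarrow> ('b \<Rightarrow> 'a set) \<Rightarrow> bool" where
  "tree_decomposition V E VT ET B \<longleftrightarrow> is_tree VT ET \<and>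
     (\<forall>z\<in>VT. B z \<subseteq> V) \<and> (\<Union>z\<in>VT. B z) = V \<and>
     (\<forall>u v. E u v \<longrightarrow> (\<exists>z\<in>VT. u \<in> B z \<and> v \<in> B z)) \<and>
     (\<forall>v\<in>V. connected_set ET {z \<in> VT. v \<in> B z})"

definition Gx :: "'b set \<Rightarrow> ('b \<Rightarrow> 'b \<Rightarrow> bool) \<Rightarrow> ('b \<Rightarrow> 'a set) \<Rightarrow> 'b \<Rightarrow> 'b \<Rightarrow> 'a set" where
  "Gx VT ET B r x = (\<Union>z\<in>subtree_nodes VT ET r x. B z)"

definition Gmx :: "'a set \<Rightarrow> 'b set \<Rightarrow> ('b \<Rightarrow> 'b \<Rightarrow> bool) \<Rightarrow> ('b \<Rightarrow> 'a set) \<Rightarrow> 'b \<Rightarrow> 'b \<Rightarrow> 'a set" where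
  "Gmx V VT ET B r x = V - Gx VT ET B r x"

definition non_piercing :: "'a set \<Rightarrow> ('a \<Rightarrow> 'a \<Rightarrow> bool) \<Rightarrow> 'a set set \<Rightarrow> bool" where
  "non_piercing V E \<H> \<longleftrightarrow>
     (\<forall>H\<in>\<H>. H \<subseteq> V \<and> connected_set E H) \<and>
     (\<forall>H\<in>\<H>. \<forall>H'\<in>\<H>. connected_set E (H - H'))"

definition properly_intersect :: "'a set \<Rightarrow> 'a set \<Rightarrow> bool" where
  "properly_intersect X Y \<longleftrightarrow> X - Y \<noteq> {} \<and> Y - X \<noteq> {}"

end

theory Submission
  imports Defs
begin

text \<open>In a rooted tree decomposition, the only tree edge leaving the subtree \<open>T\<^sub>x\<close> is the
  edge from \<open>x\<close> to its parent \<open>y\<close>. Since the bags containing a vertex form a subtree, every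
  edge of \<open>G\<close> from \<open>G\<^sub>x\<close> to \<open>G\<^sub>-\<^sub>x\<close> starts in the adhesion \<open>A = B\<^sub>x \<inter> B\<^sub>y\<close>, so every connected
  set meeting both \<open>G\<^sub>x\<close> and \<open>G\<^sub>-\<^sub>x\<close> meets \<open>A\<close>. Non-piercing makes every \<open>H - H'\<close> connected.
  Hence if \<open>H \<inter> A \<subseteq> H'\<close> and \<open>H - H'\<close> meets \<open>G\<^sub>x\<close>, then \<open>H - H'\<close> avoids \<open>G\<^sub>-\<^sub>x\<close>, i.e.
  \<open>H|\<^sub>-\<^sub>x \<subseteq> H'|\<^sub>-\<^sub>x\<close>; all three claims are instances of this.\<close>

lemma walk_in_Cons:
  "walk_in E S (a # xs) \<longleftrightarrow> a \<in> S \<and> (xs = [] \<or> E a (hd xs) \<and> walk_in E S xs)"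
proof (cases xs)
  case Nil
  then show ?thesis by (simp add: walk_in_def)
next
  case (Cons b ys)
  have "(\<forall>i < length (a # b # ys) - 1. E ((a # b # ys) ! i) ((a # b # ys) ! Suc i)) \<longleftrightarrow>
        E a b \<and> (\<forall>i < length (b # ys) - 1. E ((b # ys) ! i) ((b # ys) ! Suc i))"
    by (auto simp: less_Suc_eq_0_disj)
  then show ?thesis using Cons by (auto simp: walk_in_def)
qed

lemma walk_in_nonempty: "walk_in E S xs \<Longrightarrow> xs \<noteq> []"
  by (simp add: walk_in_def)

lemma walk_in_mono:
  assumes "walk_in E S xs" "S \<subseteq> S'"
    and "\<And>a b. a \<in> set xs \<Longrightarrow> b \<in> set xs \<Longrightarrow> E a b \<Longrightarrow> E' a b"
  shows "walk_in E' S' xs"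
  using assms unfolding walk_in_def
  by (auto; metis Suc_lessD less_diff_conv nth_mem add.commute plus_1_eq_Suc)

lemma walk_in_take: "walk_in E S xs \<Longrightarrow> k < length xs \<Longrightarrow> walk_in E S (take (Suc k) xs)"
  unfolding walk_in_def by (auto dest: in_set_takeD)

lemma list_ex_adjacent_change:
  assumes "xs \<noteq> []" "P (hd xs)" "\<not> P (last xs)"
  shows "\<exists>i < length xs - 1. P (xs ! i) \<and> \<not> P (xs ! Suc i)"
  using assms
proof (induction xs)
  case Nil
  then show ?case by simp
next
  case (Cons a xs)
  show ?case
  proof (cases "xs \<noteq> [] \<and> P (hd xs)")
    case True
    then obtain i where "i < length xs - 1" "P (xs ! i)" "\<not> P (xs ! Suc i)"
      using Cons by auto
    then show ?thesis by (intro exI[of _ "Suc i"]) auto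
  next
    case False
    with Cons.prems have "xs \<noteq> []" "\<not> P (hd xs)" by auto
    then show ?thesis using Cons.prems by (intro exI[of _ 0]) (auto simp: hd_conv_nth)
  qed
qed

lemma walk_in_ex_edge_leaving:
  assumes "walk_in E S xs" "hd xs \<in> X" "last xs \<notin> X"
  obtains a b where "a \<in> S" "b \<in> S" "E a b" "a \<in> X" "b \<notin> X"
proof -
  obtain i where i: "i < length xs - 1" "xs ! i \<in> X" "xs ! Suc i \<notin> X"
    using list_ex_adjacent_change[OF walk_in_nonempty[OF assms(1)], of "\<lambda>t. t \<in> X"] assms
    by auto
  moreover have "xs ! i \<in> S" "xs ! Suc i \<in> S" "E (xs ! i) (xs ! Suc i)"
    using assms(1) i(1) nth_mem[of i xs] nth_mem[of "Suc i" xs] by (auto simp: walk_in_def)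
  ultimately show thesis using that by blast
qed

lemma not_in_subtree_nodesE:
  assumes "z \<in> VT" "z \<notin> subtree_nodes VT ET r x"
  obtains p where "walk_in ET VT p" "hd p = z" "last p = r" "x \<notin> set p"
  using assms unfolding subtree_nodes_def by auto

lemma subtree_nodes_edge_leaving_at_root:
  assumes "ET a b" "a \<in> subtree_nodes VT ET r x" "b \<in> VT" "b \<notin> subtree_nodes VT ET r x"
  shows "a = x"
proof -
  obtain p where p: "walk_in ET VT p" "hd p = b" "last p = r" "x \<notin> set p"
    using not_in_subtree_nodesE[OF assms(3,4)] by blast
  have "walk_in ET VT (a # p)" "last (a # p) = r"
    using p walk_in_nonempty[OF p(1)] assms(1,2) by (auto simp: walk_in_Cons subtree_nodes_def)
  then have "x \<in> set (a # p)" using assms(2) unfolding subtree_nodes_def by force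
  then show ?thesis using p(4) by auto
qed

text \<open>A walk from \<open>b\<close> to the root avoiding \<open>x\<close> must visit the parent \<open>y\<close>; its part up to
  \<open>y\<close>, preceded by \<open>x\<close>, would join \<open>x\<close> and \<open>y\<close> without the edge \<open>xy\<close>.\<close>
lemma child_edge_leaving_subtree_nodes:
  assumes tree: "is_tree VT ET" and child: "is_child VT ET r x y"
    and "ET x b" "b \<in> VT" "b \<notin> subtree_nodes VT ET r x"
  shows "b = y"
proof (rule ccontr)
  assume "b \<noteq> y"
  have sg: "simple_graph VT ET" using tree by (simp add: is_tree_def)
  have xy: "ET x y" and x_below_y: "x \<in> subtree_nodes VT ET r y"
    using child by (auto simp: is_child_def)
  have "x \<in> VT" "x \<noteq> y" using sg xy by (auto simp: simple_graph_def)
  obtain p where p: "walk_in ET VT p" "hd p = b" "last p = r" "x \<notin> set p"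
    using not_in_subtree_nodesE[OF assms(4,5)] by blast
  have "walk_in ET VT (x # p)" "last (x # p) = r"
    using p walk_in_nonempty[OF p(1)] \<open>x \<in> VT\<close> assms(3) by (auto simp: walk_in_Cons)
  then have "y \<in> set (x # p)"
    using x_below_y unfolding subtree_nodes_def by force
  then obtain k where k: "k < length p" "p ! k = y"
    using \<open>x \<noteq> y\<close> by (auto simp: in_set_conv_nth)
  define q where "q = take (Suc k) p"
  have q_walk: "walk_in ET VT q" unfolding q_def by (rule walk_in_take[OF p(1) k(1)])
  have q_hd: "hd q = b" using p(2) walk_in_nonempty[OF p(1)] by (simp add: q_def hd_take)
  have q_last: "last q = y" using k by (simp add: q_def take_Suc_conv_app_nth)
  have "x \<notin> set q" using p(4) unfolding q_def by (meson in_set_takeD)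
  let ?E' = "\<lambda>a b. ET a b \<and> {a, b} \<noteq> {x, y}"
  have "walk_in ?E' VT q"
    by (rule walk_in_mono[OF q_walk]) (use \<open>x \<notin> set q\<close> in \<open>auto simp: doubleton_eq_iff\<close>)
  then have "walk_in ?E' VT (x # q)"
    using q_hd \<open>x \<in> VT\<close> assms(3) \<open>b \<noteq> y\<close> \<open>x \<noteq> y\<close> by (auto simp: walk_in_Cons doubleton_eq_iff)
  moreover have "\<not> (\<exists>xs. walk_in ?E' VT xs \<and> hd xs = x \<and> last xs = y)"
    using tree xy unfolding is_tree_def by blast
  ultimately show False using q_last walk_in_nonempty[OF q_walk] by force
qed

lemma tree_decomposition_edge_leaving_Gx:
  assumes td: "tree_decomposition V E VT ET B" and child: "is_child VT ET r x y"
    and "E u v" "u \<in> Gx VT ET B r x" "v \<notin> Gx VT ET B r x"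
  shows "u \<in> B x \<inter> B y"
proof -
  let ?T\<^sub>x = "subtree_nodes VT ET r x" and ?T\<^sub>u = "{t \<in> VT. u \<in> B t}"
  have tree: "is_tree VT ET" using td by (simp add: tree_decomposition_def)
  obtain z where z: "z \<in> VT" "u \<in> B z" "v \<in> B z"
    using td assms(3) unfolding tree_decomposition_def by blast
  then have "z \<notin> ?T\<^sub>x" using assms(5) by (auto simp: Gx_def)
  obtain z' where z': "z' \<in> ?T\<^sub>x" "u \<in> B z'" using assms(4) by (auto simp: Gx_def)
  have "u \<in> V" using td z by (auto simp: tree_decomposition_def)
  then have "connected_set ET ?T\<^sub>u" using td by (auto simp: tree_decomposition_def)
  moreover have "z' \<in> ?T\<^sub>u" "z \<in> ?T\<^sub>u" using z z' by (auto simp: subtree_nodes_def)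
  ultimately obtain w where w: "walk_in ET ?T\<^sub>u w" "hd w = z'" "last w = z"
    unfolding connected_set_def by meson
  obtain a b where ab: "a \<in> ?T\<^sub>u" "b \<in> ?T\<^sub>u" "ET a b" "a \<in> ?T\<^sub>x" "b \<notin> ?T\<^sub>x"
    by (rule walk_in_ex_edge_leaving[OF w(1)]) (use w z' \<open>z \<notin> ?T\<^sub>x\<close> in simp_all)
  then have "a = x" using subtree_nodes_edge_leaving_at_root[of ET a b] by simp
  moreover have "b = y"
    using child_edge_leaving_subtree_nodes[OF tree child, of b] ab \<open>a = x\<close> by simp
  ultimately show ?thesis using ab by auto
qed

lemma connected_set_crossing_Gx_meets_adhesion:
  assumes td: "tree_decomposition V E VT ET B" and child: "is_child VT ET r x y"
    and S: "connected_set E S" "u \<in> S" "u \<in> Gx VT ET B r x" "v \<in> S" "v \<notin> Gx VT ET B r x"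
  shows "S \<inter> (B x \<inter> B y) \<noteq> {}"
proof -
  obtain p where p: "walk_in E S p" "hd p = u" "last p = v"
    using S unfolding connected_set_def by blast
  obtain a b where "a \<in> S" "E a b" "a \<in> Gx VT ET B r x" "b \<notin> Gx VT ET B r x"
    by (rule walk_in_ex_edge_leaving[OF p(1)]) (use p S in simp_all)
  then show ?thesis using tree_decomposition_edge_leaving_Gx[OF td child] by blast
qed

lemma non_piercing_outside_trace_mono:
  assumes td: "tree_decomposition V E VT ET B" and child: "is_child VT ET r x y"
    and np: "non_piercing V E \<H>" and "K \<in> \<H>" "K' \<in> \<H>"
    and adhesion: "K \<inter> (B x \<inter> B y) \<subseteq> K'"
    and inside: "(K - K') \<inter> Gx VT ET B r x \<noteq> {}"
  shows "K \<inter> Gmx V VT ET B r x \<subseteq> K' \<inter> Gmx V VT ET B r x"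
proof
  fix v assume v: "v \<in> K \<inter> Gmx V VT ET B r x"
  show "v \<in> K' \<inter> Gmx V VT ET B r x"
  proof (rule ccontr)
    assume "v \<notin> K' \<inter> Gmx V VT ET B r x"
    then have "v \<in> K - K'" "v \<notin> Gx VT ET B r x" using v by (auto simp: Gmx_def)
    moreover have "connected_set E (K - K')"
      using np \<open>K \<in> \<H>\<close> \<open>K' \<in> \<H>\<close> by (simp add: non_piercing_def)
    ultimately have "(K - K') \<inter> (B x \<inter> B y) \<noteq> {}"
      using inside connected_set_crossing_Gx_meets_adhesion[OF td child] by blast
    then show False using adhesion by blast
  qed
qed

theorem mainTheorem8:
  fixes V :: "'a set" and E :: "'a \<Rightarrow> 'a \<Rightarrow> bool"
    and VT :: "'b set" and ET :: "'b \<Rightarrow> 'b \<Rightarrow> bool" and B :: "'b \<Rightarrow> 'a set"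
    and r x y :: 'b and \<H> :: "'a set set" and H H' :: "'a set"
  assumes "simple_graph V E"
    and "non_piercing V E \<H>"
    and "tree_decomposition V E VT ET B"
    and "r \<in> VT"
    and "is_child VT ET r x y"
    and "H \<in> \<H>" and "H' \<in> \<H>"
    and "H \<inter> (B x \<inter> B y) \<noteq> {}" and "H' \<inter> (B x \<inter> B y) \<noteq> {}"
  shows
    "(H \<inter> (B x \<inter> B y) = H' \<inter> (B x \<inter> B y) \<and> H \<inter> Gx VT ET B r x \<subset> H' \<inter> Gx VT ET B r x
        \<longrightarrow> H' \<inter> Gmx V VT ET B r x \<subseteq> H \<inter> Gmx V VT ET B r x)
     \<and> (H \<inter> (B x \<inter> B y) = H' \<inter> (B x \<inter> B y)
          \<and> properly_intersect (H \<inter> Gx VT ET B r x) (H' \<inter> Gx VT ET B r x)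
        \<longrightarrow> H \<inter> Gmx V VT ET B r x = H' \<inter> Gmx V VT ET B r x)
     \<and> (H \<inter> (B x \<inter> B y) \<subset> H' \<inter> (B x \<inter> B y)
          \<and> properly_intersect (H \<inter> Gx VT ET B r x) (H' \<inter> Gx VT ET B r x)
        \<longrightarrow> H \<inter> Gmx V VT ET B r x \<subseteq> H' \<inter> Gmx V VT ET B r x)"
proof -
  note mono = non_piercing_outside_trace_mono[OF assms(3,5,2)]
  have H_H': "H \<inter> Gmx V VT ET B r x \<subseteq> H' \<inter> Gmx V VT ET B r x"
    if "H \<inter> (B x \<inter> B y) \<subseteq> H'" "(H - H') \<inter> Gx VT ET B r x \<noteq> {}"
    using mono[OF assms(6,7) that] .
  have H'_H: "H' \<inter> Gmx V VT ET B r x \<subseteq> H \<inter> Gmx V VT ET B r x"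
    if "H' \<inter> (B x \<inter> B y) \<subseteq> H" "(H' - H) \<inter> Gx VT ET B r x \<noteq> {}"
    using mono[OF assms(7,6) that] .
  show ?thesis
  proof (intro conjI impI)
    assume "H \<inter> (B x \<inter> B y) = H' \<inter> (B x \<inter> B y) \<and> H \<inter> Gx VT ET B r x \<subset> H' \<inter> Gx VT ET B r x"
    then show "H' \<inter> Gmx V VT ET B r x \<subseteq> H \<inter> Gmx V VT ET B r x"
      by (intro H'_H) blast+
  next
    assume "H \<inter> (B x \<inter> B y) = H' \<inter> (B x \<inter> B y)
      \<and> properly_intersect (H \<inter> Gx VT ET B r x) (H' \<inter> Gx VT ET B r x)"
    then show "H \<inter> Gmx V VT ET B r x = H' \<inter> Gmx V VT ET B r x"
      unfolding properly_intersect_def by (intro equalityI H_H' H'_H) blast+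
  next
    assume "H \<inter> (B x \<inter> B y) \<subset> H' \<inter> (B x \<inter> B y)
      \<and> properly_intersect (H \<inter> Gx VT ET B r x) (H' \<inter> Gx VT ET B r x)"
    then show "H \<inter> Gmx V VT ET B r x \<subseteq> H' \<inter> Gmx V VT ET B r x"
      unfolding properly_intersect_def by (intro H_H') blast+
  qed
qed

end
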